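(* Let $\mathsf V$ be a quantale, $f:(X,a)\to(Y,b)$ a $\mathsf V$-functor and $s=(x_n)_{n\in\mathbb N}$ a Cauchy sequence in $X$; let $f(s)=(f(x_n))_{n\in\mathbb N}$. Then $\varphi_{f(s)}=f_*\cdot\varphi_s$ and $\psi_{f(s)}=\psi_s\cdot f^*$, i.e. for all $y\in Y$, $\varphi_{f(s)}(y)=\bigvee_{x\in X}\varphi_s(x)\otimes b(f(x),y)$ and $\psi_{f(s)}(y)=\bigvee_{x\in X}b(y,f(x))\otimes\psi_s(x)$.
   Context: A quantale $(\mathsf V,\otimes,k)$ is a complete anti-symmetric lattice with an associative, commutative operation $\otimes$ with neutral element $k$ distributing over arbitrary suprema. A $\mathsf V$-category $(X,a)$ is a set with $a:X\times X\to\mathsf V$ such that $k\le a(x,x)$ and $a(x,y)\otimes a(y,z)\le a(x,z)$; a $\mathsf V$-functor $f:(X,a)\to(Y,b)$ satisfies $a(x,y)\le b(f(x),f(y))$. A sequence $s=(x_n)$ in $(X,a)$ is Cauchy if $k\le\bigvee_{N}\bigwedge_{n,m\ge N}a(x_n,x_m)$; $\varphi_s(x)=\bigvee_N\bigwedge_{n\ge N}a(x_n,x)$ and $\psi_s(x)=\bigvee_N\bigwedge_{n\ge N}a(x,x_n)$ (similarly in $Y$ with $b$). *)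

theory Defs
  imports Main
begin

definition quantale :: "('v::complete_lattice \<Rightarrow> 'v \<Rightarrow> 'v) \<Rightarrow> 'v \<Rightarrow> bool" where
  "quantale tens k \<longleftrightarrow>
     (\<forall>u v w. tens (tens u v) w = tens u (tens v w)) \<and>
     (\<forall>u v. tens u v = tens v u) \<and>
     (\<forall>u. tens k u = u) \<and>
     (\<forall>u S. tens u (Sup S) = (SUP v\<in>S. tens u v))"

definition V_category :: "('v::complete_lattice \<Rightarrow> 'v \<Rightarrow> 'v) \<Rightarrow> 'v \<Rightarrow> ('x \<Rightarrow> 'x \<Rightarrow> 'v) \<Rightarrow> bool" where
  "V_category tens k a \<longleftrightarrow>
     (\<forall>x. k \<le> a x x) \<and> (\<forall>x y z. tens (a x y) (a y z) \<le> a x z)"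

definition V_functor :: "('x \<Rightarrow> 'x \<Rightarrow> 'v::complete_lattice) \<Rightarrow> ('y \<Rightarrow> 'y \<Rightarrow> 'v) \<Rightarrow> ('x \<Rightarrow> 'y) \<Rightarrow> bool" where
  "V_functor a b f \<longleftrightarrow> (\<forall>x y. a x y \<le> b (f x) (f y))"

definition cauchy_seq_V :: "'v::complete_lattice \<Rightarrow> ('x \<Rightarrow> 'x \<Rightarrow> 'v) \<Rightarrow> (nat \<Rightarrow> 'x) \<Rightarrow> bool" where
  "cauchy_seq_V k a s \<longleftrightarrow> k \<le> (SUP N. INF n\<in>{N..}. INF m\<in>{N..}. a (s n) (s m))"

definition phi_seq :: "('x \<Rightarrow> 'x \<Rightarrow> 'v::complete_lattice) \<Rightarrow> (nat \<Rightarrow> 'x) \<Rightarrow> 'x \<Rightarrow> 'v" where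
  "phi_seq a s x = (SUP N. INF n\<in>{N..}. a (s n) x)"

definition psi_seq :: "('x \<Rightarrow> 'x \<Rightarrow> 'v::complete_lattice) \<Rightarrow> (nat \<Rightarrow> 'x) \<Rightarrow> 'x \<Rightarrow> 'v" where
  "psi_seq a s x = (SUP N. INF n\<in>{N..}. a x (s n))"

end

theory Submission
  imports Defs
begin

text \<open>Let \<open>g : X \<rightarrow> V\<close> satisfy \<open>a(x,x') \<otimes> g(x') \<le> g(x)\<close>. For a Cauchy sequence \<open>s\<close>,
  \<open>\<Squnion>\<^sub>x \<phi>\<^sub>s(x) \<otimes> g(x)\<close> is the liminf \<open>\<Squnion>\<^sub>N \<Sqinter>\<^sub>n\<^sub>\<ge>\<^sub>N g(x\<^sub>n)\<close>. The inequality \<open>\<le>\<close> needs only the condition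
  on \<open>g\<close>. For \<open>\<ge>\<close>, write the liminf as \<open>k \<otimes> liminf\<close> and bound \<open>k\<close> by the Cauchy condition;
  since both factors are suprema of increasing sequences, the product is attained at a single late
  index \<open>L\<close>, where the first factor is below \<open>\<phi>\<^sub>s(x\<^sub>L)\<close> and the second below \<open>g(x\<^sub>L)\<close>.
  Taking \<open>g(x) = b(f x, y)\<close> gives the formula for \<open>\<phi>\<close>. Since \<open>\<psi>\<close> is \<open>\<phi>\<close> of the dual categories
  and \<open>\<otimes>\<close> is commutative, the formula for \<open>\<psi>\<close> follows from the same statement.\<close>

lemma quantale_commute: "quantale tens k \<Longrightarrow> tens u v = tens v u"
  unfolding quantale_def by blast

lemma quantale_unit: "quantale tens k \<Longrightarrow> tens k u = u"
  unfolding quantale_def by blast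

lemma quantale_SUP_distrib_right:
  assumes "quantale tens k"
  shows "tens w (SUP i\<in>I. F i) = (SUP i\<in>I. tens w (F i))"
proof -
  have "tens w (Sup (F ` I)) = (SUP v\<in>F ` I. tens w v)"
    using assms unfolding quantale_def by blast
  then show ?thesis by (simp only: image_image)
qed

lemma quantale_SUP_distrib_left:
  assumes "quantale tens k"
  shows "tens (SUP i\<in>I. F i) w = (SUP i\<in>I. tens (F i) w)"
  by (simp only: quantale_commute[OF assms, of _ w] quantale_SUP_distrib_right[OF assms])

lemma quantale_mono:
  assumes q: "quantale tens k" and "u \<le> u'" "v \<le> v'"
  shows "tens u v \<le> tens u' v'"
proof -
  have right_mono: "tens w x \<le> tens w x'" if "x \<le> x'" for w x x'
  proof -
    have "tens w x' = tens w (SUP z\<in>{x, x'}. z)"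
      using that by (simp add: sup_absorb2)
    also have "\<dots> = sup (tens w x) (tens w x')"
      using quantale_SUP_distrib_right[OF q, of w "\<lambda>z. z" "{x, x'}"] by simp
    finally show ?thesis by (metis sup.cobounded1)
  qed
  have "tens u v \<le> tens u v'" using right_mono \<open>v \<le> v'\<close> .
  also have "\<dots> = tens v' u" by (rule quantale_commute[OF q])
  also have "\<dots> \<le> tens v' u'" using right_mono \<open>u \<le> u'\<close> .
  also have "\<dots> = tens u' v'" by (rule quantale_commute[OF q])
  finally show ?thesis .
qed

lemma quantale_SUP_tens_incseq:
  fixes C D :: "'i::linorder \<Rightarrow> 'v::complete_lattice"
  assumes q: "quantale tens k" and "mono C" "mono D"
  shows "tens (SUP M. C M) (SUP N. D N) = (SUP L. tens (C L) (D L))"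
proof (rule antisym)
  have "tens (C M) (D N) \<le> (SUP L. tens (C L) (D L))" for M N
  proof -
    have "tens (C M) (D N) \<le> tens (C (max M N)) (D (max M N))"
      using assms by (intro quantale_mono[OF q] monoD[of C] monoD[of D]) simp_all
    also have "\<dots> \<le> (SUP L. tens (C L) (D L))" by (rule SUP_upper) simp
    finally show ?thesis .
  qed
  then show "tens (SUP M. C M) (SUP N. D N) \<le> (SUP L. tens (C L) (D L))"
    by (simp add: quantale_SUP_distrib_left[OF q] quantale_SUP_distrib_right[OF q] SUP_least)
  show "(SUP L. tens (C L) (D L)) \<le> tens (SUP M. C M) (SUP N. D N)"
    by (intro SUP_least quantale_mono[OF q] SUP_upper) simp_all
qed

lemma mono_INF_atLeast: "mono (\<lambda>N. INF n\<in>{N..}. g n :: 'a::complete_lattice)"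
  by (intro monoI INF_superset_mono) auto

lemma mono_INF_INF_atLeast:
  "mono (\<lambda>N. INF n\<in>{N..}. INF m\<in>{N..}. a (s n) (s m) :: 'a::complete_lattice)"
  by (intro monoI INF_superset_mono) auto

lemma INF_INF_atLeast_le_phi_seq:
  "(INF n\<in>{N..}. INF m\<in>{N..}. a (s n) (s m)) \<le> phi_seq a s (s N)"
proof -
  have "(INF n\<in>{N..}. INF m\<in>{N..}. a (s n) (s m)) \<le> (INF n\<in>{N..}. a (s n) (s N))"
    by (intro INF_mono) (auto intro: INF_lower)
  also have "\<dots> \<le> phi_seq a s (s N)"
    unfolding phi_seq_def by (rule SUP_upper) simp
  finally show ?thesis .
qed

lemma SUP_phi_seq_tens_le_liminf:
  assumes q: "quantale tens k"
    and g: "\<And>x x'. tens (a x x') (g x') \<le> g x"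
  shows "(SUP x. tens (phi_seq a s x) (g x)) \<le> (SUP N. INF n\<in>{N..}. g (s n))"
proof (rule SUP_least)
  fix x
  have "tens (INF n\<in>{N..}. a (s n) x) (g x) \<le> g (s n)" if "n \<in> {N..}" for N n
  proof -
    have "tens (INF n\<in>{N..}. a (s n) x) (g x) \<le> tens (a (s n) x) (g x)"
      using that by (intro quantale_mono[OF q] INF_lower) simp_all
    also have "\<dots> \<le> g (s n)" by (rule g)
    finally show ?thesis .
  qed
  then have "tens (INF n\<in>{N..}. a (s n) x) (g x) \<le> (INF n\<in>{N..}. g (s n))" for N
    by (rule INF_greatest)
  then show "tens (phi_seq a s x) (g x) \<le> (SUP N. INF n\<in>{N..}. g (s n))"
    unfolding phi_seq_def quantale_SUP_distrib_left[OF q] by (rule SUP_mono')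
qed

lemma liminf_le_SUP_phi_seq_tens:
  assumes q: "quantale tens k" and cauchy: "cauchy_seq_V k a s"
  shows "(SUP N. INF n\<in>{N..}. g (s n)) \<le> (SUP x. tens (phi_seq a s x) (g x))"
proof -
  define C where "C N = (INF n\<in>{N..}. INF m\<in>{N..}. a (s n) (s m))" for N
  define D where "D N = (INF n\<in>{N..}. g (s n))" for N
  have "(SUP N. D N) = tens k (SUP N. D N)"
    by (simp add: quantale_unit[OF q])
  also have "\<dots> \<le> tens (SUP N. C N) (SUP N. D N)"
    using cauchy unfolding cauchy_seq_V_def C_def by (intro quantale_mono[OF q]) simp_all
  also have "\<dots> = (SUP L. tens (C L) (D L))"
    unfolding C_def D_def
    by (rule quantale_SUP_tens_incseq[OF q mono_INF_INF_atLeast mono_INF_atLeast])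
  also have "\<dots> \<le> (SUP L. tens (phi_seq a s (s L)) (g (s L)))"
  proof (intro SUP_mono' quantale_mono[OF q])
    show "C L \<le> phi_seq a s (s L)" for L
      unfolding C_def by (rule INF_INF_atLeast_le_phi_seq)
    show "D L \<le> g (s L)" for L
      unfolding D_def by (rule INF_lower) simp
  qed
  also have "\<dots> \<le> (SUP x. tens (phi_seq a s x) (g x))"
    by (intro SUP_least SUP_upper) simp
  finally show ?thesis unfolding D_def .
qed

lemma SUP_phi_seq_tens_eq_liminf:
  assumes "quantale tens k" and "cauchy_seq_V k a s"
    and "\<And>x x'. tens (a x x') (g x') \<le> g x"
  shows "(SUP x. tens (phi_seq a s x) (g x)) = (SUP N. INF n\<in>{N..}. g (s n))"
  using assms by (intro antisym SUP_phi_seq_tens_le_liminf liminf_le_SUP_phi_seq_tens)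

lemma psi_seq_eq_phi_seq_dual: "psi_seq a s = phi_seq (\<lambda>x y. a y x) s"
  unfolding psi_seq_def phi_seq_def ..

lemma cauchy_seq_V_dual: "cauchy_seq_V k a s \<Longrightarrow> cauchy_seq_V k (\<lambda>x y. a y x) s"
  unfolding cauchy_seq_V_def by (subst INF_commute)

lemma V_functor_tens_le_left:
  assumes q: "quantale tens k" and "V_category tens k b" and "V_functor a b f"
  shows "tens (a x x') (b (f x') y) \<le> b (f x) y"
proof -
  have "tens (a x x') (b (f x') y) \<le> tens (b (f x) (f x')) (b (f x') y)"
    using \<open>V_functor a b f\<close> unfolding V_functor_def by (intro quantale_mono[OF q]) simp_all
  also have "\<dots> \<le> b (f x) y"
    using \<open>V_category tens k b\<close> unfolding V_category_def by blast
  finally show ?thesis .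
qed

lemma V_functor_tens_le_right:
  assumes q: "quantale tens k" and "V_category tens k b" and "V_functor a b f"
  shows "tens (a x' x) (b y (f x')) \<le> b y (f x)"
proof -
  have "tens (a x' x) (b y (f x')) \<le> tens (b (f x') (f x)) (b y (f x'))"
    using \<open>V_functor a b f\<close> unfolding V_functor_def by (intro quantale_mono[OF q]) simp_all
  also have "\<dots> = tens (b y (f x')) (b (f x') (f x))" by (rule quantale_commute[OF q])
  also have "\<dots> \<le> b y (f x)"
    using \<open>V_category tens k b\<close> unfolding V_category_def by blast
  finally show ?thesis .
qed

theorem lemma3p14:
  fixes tens :: "'v::complete_lattice \<Rightarrow> 'v \<Rightarrow> 'v" and k :: 'v
    and a :: "'x \<Rightarrow> 'x \<Rightarrow> 'v" and b :: "'y \<Rightarrow> 'y \<Rightarrow> 'v"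
    and f :: "'x \<Rightarrow> 'y" and s :: "nat \<Rightarrow> 'x"
  assumes "quantale tens k"
    and "V_category tens k a" and "V_category tens k b"
    and "V_functor a b f"
    and "cauchy_seq_V k a s"
  shows "(\<forall>y. phi_seq b (f \<circ> s) y = (SUP x. tens (phi_seq a s x) (b (f x) y))) \<and>
         (\<forall>y. psi_seq b (f \<circ> s) y = (SUP x. tens (b y (f x)) (psi_seq a s x)))"
proof (intro conjI allI)
  fix y
  show "phi_seq b (f \<circ> s) y = (SUP x. tens (phi_seq a s x) (b (f x) y))"
    using SUP_phi_seq_tens_eq_liminf[OF assms(1,5) V_functor_tens_le_left[OF assms(1,3,4)]]
    by (simp add: phi_seq_def)
  have "(SUP x. tens (psi_seq a s x) (b y (f x))) = psi_seq b (f \<circ> s) y"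
    using SUP_phi_seq_tens_eq_liminf[OF assms(1) cauchy_seq_V_dual[OF assms(5)]
        V_functor_tens_le_right[OF assms(1,3,4)]]
    by (simp add: psi_seq_eq_phi_seq_dual phi_seq_def)
  then show "psi_seq b (f \<circ> s) y = (SUP x. tens (b y (f x)) (psi_seq a s x))"
    by (simp add: quantale_commute[OF assms(1)])
qed

end
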